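(* Let $q$ be an odd prime power and $n\ge 1$. If $A\subset\mathbb{F}_q^n$ satisfies \[ |A|>2\binom{n+q-1}{q-1}+2\binom{n+\frac{q-1}{2}}{\frac{q-1}{2}}+2, \] then $A$ contains a right angle.
   Context: $\mathbb{F}_q^n$ carries the standard bilinear form $\langle u,v\rangle=\sum_{i=1}^n u_iv_i$. A right angle in $\mathbb{F}_q^n$ is a triple $x,y,z\in\mathbb{F}_q^n$ of pairwise distinct elements satisfying $\langle x-y,x-z\rangle=0$. *)

theory Defs
  imports "HOL-Analysis.Analysis"
begin

definition bform :: "'a::comm_ring ^ 'n \<Rightarrow> 'a ^ 'n \<Rightarrow> 'a" where
  "bform u v = (\<Sum>i\<in>UNIV. u $ i * v $ i)"

definition right_angle :: "'a::comm_ring ^ 'n \<Rightarrow> 'a ^ 'n \<Rightarrow> 'a ^ 'n \<Rightarrow> bool" where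
  "right_angle x y z \<longleftrightarrow> x \<noteq> y \<and> x \<noteq> z \<and> y \<noteq> z \<and> bform (x - y) (x - z) = 0"

end

theory Submission
  imports Defs "HOL-Library.Function_Algebras" "HOL-Library.Multiset"
begin

text \<open>
  Fix \<open>w \<in> A\<close>. For \<open>x \<in> A - {w}\<close> the polynomial function
  \<open>y \<mapsto> 1 - \<langle>x - y, x - w\<rangle>^(q-1)\<close> restricts on \<open>A - {w}\<close> to the indicator of \<open>x\<close>:
  it is 1 at \<open>y = x\<close>, and for \<open>y \<noteq> x\<close> the form does not vanish (no right angle at \<open>x\<close>),
  so Fermat's little theorem makes the power 1. These indicators are linearly independent
  and lie in the space of polynomial functions of degree at most \<open>q - 1\<close> in \<open>n\<close> variables,
  whose dimension is \<open>(n + q - 1) choose (q - 1)\<close>. So a set without right angles has at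
  most \<open>1 + ((n + q - 1) choose (q - 1))\<close> elements.
\<close>

lemma power_card_minus_one_eq_one:
  fixes a :: "'a::{finite,field}"
  assumes "a \<noteq> 0"
  shows "a ^ (CARD('a) - 1) = 1"
proof -
  let ?S = "UNIV - {0::'a}"
  have "bij_betw (\<lambda>y. a * y) ?S ?S"
    using assms by (intro bij_betwI[where g = "\<lambda>y. y / a"]) auto
  then have "(\<Prod>y\<in>?S. a * y) = (\<Prod>y\<in>?S. y)"
    using prod.reindex_bij_betw[of "\<lambda>y. a * y" ?S ?S "\<lambda>y. y"] by simp
  moreover have "(\<Prod>y\<in>?S. a * y) = a ^ card ?S * (\<Prod>y\<in>?S. y)"
    by (simp add: prod.distrib)
  moreover have "(\<Prod>y\<in>?S. y) \<noteq> 0" by simp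
  moreover have "card ?S = CARD('a) - 1"
    by (simp add: card_Diff_singleton)
  ultimately show ?thesis by (metis mult_cancel_right1)
qed

definition fun_scale :: "'a::field \<Rightarrow> ('b \<Rightarrow> 'a) \<Rightarrow> 'b \<Rightarrow> 'a" where
  "fun_scale c f = (\<lambda>y. c * f y)"

global_interpretation Fun: vector_space "fun_scale :: 'a::field \<Rightarrow> ('b \<Rightarrow> 'a) \<Rightarrow> 'b \<Rightarrow> 'a"
  unfolding vector_space_def fun_scale_def by (auto simp: fun_eq_iff algebra_simps)

lemma sum_fun_apply: "(\<Sum>i\<in>I. f i) y = (\<Sum>i\<in>I. f i y)"
  by (induction I rule: infinite_finite_induct) auto

lemma card_le_card_if_indicators_in_span:
  fixes f :: "'b \<Rightarrow> 'b \<Rightarrow> 'a::field"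
  assumes "finite S" "finite B"
    and is_indicator: "\<And>x y. x \<in> S \<Longrightarrow> y \<in> S \<Longrightarrow> f x y = (if x = y then 1 else 0)"
    and in_span: "\<And>x. x \<in> S \<Longrightarrow> f x \<in> Fun.span B"
  shows "card S \<le> card B"
proof -
  have inj: "inj_on f S"
    by (rule inj_onI) (metis is_indicator zero_neq_one)
  have "Fun.independent (f ` S)"
  proof (rule Fun.independent_if_scalars_zero)
    show "finite (f ` S)" using \<open>finite S\<close> by simp
  next
    fix c g
    assume comb: "(\<Sum>h\<in>f ` S. fun_scale (c h) h) = 0" and "g \<in> f ` S"
    then obtain x where x: "x \<in> S" "g = f x" by auto
    have "0 = (\<Sum>h\<in>f ` S. fun_scale (c h) h) x"
      using comb by simp
    also have "\<dots> = (\<Sum>x'\<in>S. c (f x') * f x' x)"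
      using inj by (simp add: sum_fun_apply fun_scale_def sum.reindex)
    also have "\<dots> = (\<Sum>x'\<in>S. if x' = x then c (f x') else 0)"
      using x by (intro sum.cong) (auto simp: is_indicator)
    also have "\<dots> = c (f x)"
      using x \<open>finite S\<close> by simp
    finally show "c g = 0" using x by simp
  qed
  then have "card (f ` S) \<le> card B"
    using Fun.independent_span_bound[OF \<open>finite B\<close>] in_span by blast
  then show ?thesis
    using card_image[OF inj] by simp
qed

text \<open>
  A multiset of size \<open>k\<close> over \<open>'n option\<close> encodes a monomial of degree at most \<open>k\<close>
  in the coordinates: \<open>Some j\<close> stands for the coordinate \<open>y $ j\<close>, \<open>None\<close> for the
  constant 1 padding the degree up to \<open>k\<close>.
\<close>

definition padded_coord :: "'n option \<Rightarrow> 'a::field ^ 'n \<Rightarrow> 'a" where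
  "padded_coord p y = (case p of None \<Rightarrow> 1 | Some j \<Rightarrow> y $ j)"

definition padded_monomial :: "'n option multiset \<Rightarrow> 'a::field ^ 'n \<Rightarrow> 'a" where
  "padded_monomial M y = prod_mset (image_mset (\<lambda>p. padded_coord p y) M)"

abbreviation poly_funs :: "nat \<Rightarrow> ('a::field ^ 'n \<Rightarrow> 'a) set" where
  "poly_funs k \<equiv> Fun.span (padded_monomial ` multisets_of_size UNIV k)"

lemma card_padded_monomials_le:
  "card (padded_monomial ` multisets_of_size (UNIV :: 'n::finite option set) k
          :: ('a::field ^ 'n \<Rightarrow> 'a) set)
     \<le> (CARD('n) + k) choose k"
proof -
  have "card (padded_monomial ` multisets_of_size (UNIV :: 'n option set) k
          :: ('a ^ 'n \<Rightarrow> 'a) set)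
      \<le> card (multisets_of_size (UNIV :: 'n option set) k)"
    by (rule card_image_le) (simp add: finite_multisets_of_size)
  also have "\<dots> = (CARD('n) + k) choose k"
    by (simp add: card_multisets_of_size)
  finally show ?thesis .
qed

lemma padded_coord_mult_in_poly_funs:
  assumes "f \<in> poly_funs k"
  shows "(\<lambda>y. padded_coord p y * f y) \<in> poly_funs (Suc k)"
  using assms
proof (induction rule: Fun.span_induct_alt)
  case base
  then show ?case using Fun.span_zero by (simp add: zero_fun_def)
next
  case (step c g h)
  then obtain M where M: "M \<in> multisets_of_size UNIV k" "g = padded_monomial M" by auto
  have "(\<lambda>y. padded_coord p y * g y) = padded_monomial (add_mset p M)"
    using M(2) by (simp add: padded_monomial_def fun_eq_iff)
  moreover have "add_mset p M \<in> multisets_of_size UNIV (Suc k)"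
    using M(1) by (simp add: multisets_of_size_def)
  ultimately have "(\<lambda>y. padded_coord p y * g y) \<in> poly_funs (Suc k)"
    by (auto intro: Fun.span_base)
  then have "fun_scale c (\<lambda>y. padded_coord p y * g y) + (\<lambda>y. padded_coord p y * h y)
      \<in> poly_funs (Suc k)"
    using step by (intro Fun.span_add Fun.span_scale)
  moreover have "fun_scale c (\<lambda>y. padded_coord p y * g y) + (\<lambda>y. padded_coord p y * h y)
      = (\<lambda>y. padded_coord p y * (fun_scale c g + h) y)"
    by (simp add: fun_scale_def fun_eq_iff algebra_simps)
  ultimately show ?case by simp
qed

lemma affine_power_in_poly_funs:
  fixes u :: "'a::field ^ 'n::finite"
  shows "(\<lambda>y. (a + (\<Sum>i\<in>UNIV. u $ i * y $ i)) ^ k) \<in> poly_funs k"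
proof (induction k)
  case 0
  have "(\<lambda>y. (a + (\<Sum>i\<in>UNIV. u $ i * y $ i)) ^ 0) = padded_monomial {#}"
    by (simp add: padded_monomial_def fun_eq_iff)
  then show ?case by (auto intro: Fun.span_base)
next
  case (Suc k)
  let ?g = "\<lambda>y. (a + (\<Sum>i\<in>UNIV. u $ i * y $ i)) ^ k"
  have "fun_scale a (\<lambda>y. padded_coord None y * ?g y)
      + (\<Sum>i\<in>UNIV. fun_scale (u $ i) (\<lambda>y. padded_coord (Some i) y * ?g y)) \<in> poly_funs (Suc k)"
    using Suc by (intro Fun.span_add Fun.span_sum Fun.span_scale padded_coord_mult_in_poly_funs)
  moreover have "fun_scale a (\<lambda>y. padded_coord None y * ?g y)
      + (\<Sum>i\<in>UNIV. fun_scale (u $ i) (\<lambda>y. padded_coord (Some i) y * ?g y))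
      = (\<lambda>y. (a + (\<Sum>i\<in>UNIV. u $ i * y $ i)) ^ Suc k)"
    by (simp add: fun_eq_iff sum_fun_apply fun_scale_def padded_coord_def
        algebra_simps sum_distrib_right)
  ultimately show ?case by simp
qed

lemma bform_diff_left:
  "bform (x - y) v = bform x v + (\<Sum>i\<in>UNIV. (- v $ i) * y $ i)"
  unfolding bform_def
  by (simp add: sum_negf flip: sum_subtractf) (simp add: algebra_simps)

lemma card_le_if_no_right_angle:
  fixes A :: "('a::{finite,field} ^ 'n) set"
  assumes no_right_angle: "\<not> (\<exists>x\<in>A. \<exists>y\<in>A. \<exists>z\<in>A. right_angle x y z)"
  shows "card A \<le> ((CARD('n) + CARD('a) - 1) choose (CARD('a) - 1)) + 1"
proof (cases "A = {}")
  case False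
  then obtain w where w: "w \<in> A" by auto
  define q where "q = CARD('a)"
  have "card {0::'a, 1} \<le> q"
    unfolding q_def by (rule card_mono) auto
  then have "q \<ge> 2" by simp
  define f where "f x y = 1 - bform (x - y) (x - w) ^ (q - 1)" for x y :: "'a ^ 'n"
  have "card (A - {w}) \<le> card (padded_monomial ` multisets_of_size UNIV (q - 1)
          :: ('a ^ 'n \<Rightarrow> 'a) set)"
  proof (rule card_le_card_if_indicators_in_span[where f = f])
    fix x y assume "x \<in> A - {w}" "y \<in> A - {w}"
    moreover from this have "bform (x - y) (x - w) \<noteq> 0" if "x \<noteq> y"
      using no_right_angle w that unfolding right_angle_def by blast
    ultimately show "f x y = (if x = y then 1 else 0)"
      using \<open>q \<ge> 2\<close> power_card_minus_one_eq_one
      by (auto simp: f_def q_def bform_def)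
  next
    fix x
    have "f x = (\<lambda>y. (1 + (\<Sum>i\<in>UNIV. 0 $ i * y $ i)) ^ (q - 1))
        - (\<lambda>y. (bform x (x - w) + (\<Sum>i\<in>UNIV. (- (x - w)) $ i * y $ i)) ^ (q - 1))"
      by (simp add: fun_eq_iff f_def bform_diff_left)
    also have "\<dots> \<in> poly_funs (q - 1)"
      by (intro Fun.span_diff affine_power_in_poly_funs)
    finally show "f x \<in> poly_funs (q - 1)" .
  qed (simp_all add: finite_multisets_of_size)
  also have "\<dots> \<le> (CARD('n) + (q - 1)) choose (q - 1)"
    by (rule card_padded_monomials_le)
  finally show ?thesis
    using w \<open>q \<ge> 2\<close> by (simp add: q_def)
qed simp

theorem theorem1:
  fixes A :: "(('a::{finite,field}) ^ 'n) set"
  assumes "odd CARD('a)"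
    and "card A > 2 * ((CARD('n) + CARD('a) - 1) choose (CARD('a) - 1))
                 + 2 * ((CARD('n) + (CARD('a) - 1) div 2) choose ((CARD('a) - 1) div 2)) + 2"
  shows "\<exists>x\<in>A. \<exists>y\<in>A. \<exists>z\<in>A. right_angle x y z"
  using card_le_if_no_right_angle[of A] assms(2) by linarith

end
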